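(* Consider an instance of the Steiner Team Orienteering Problem and the formulation $\mathcal{F}_2$ as described in the context, and let $\mathcal{K}$ be the set of conflicting vertex pairs. For every feasible solution $(x,y,f,\varphi)$ of $\mathcal{F}_2$, every pair $\langle i,j\rangle\in\mathcal{K}$ and every $V\subseteq N\setminus\{s\}$ with $\{i,j\}\subseteq V$, we have $\sum_{e\in\delta^-(V)}x_e\ge y_i+y_j$.
   Context: An instance of the Steiner Team Orienteering Problem (STOP) consists of: a digraph $G=(N,A)$; an origin $s\in N$ and a destination $t\in N$ with $s\neq t$; disjoint sets $S,P\subseteq N\setminus\{s,t\}$ (mandatory and profitable vertices) with $N=S\cup P\cup\{s,t\}$; rewards $p_i\in\mathbb{Z}^+$ for $i\in P$; traverse times $d_{ij}\in\mathbb{R}^+$ for $(i,j)\in A$; a number $m$ of vehicles and a time limit $T$. For $i\in N$ let $\delta^+(i)=\{j\in N:(i,j)\in A\}$ and $\delta^-(i)=\{j\in N:(j,i)\in A\}$; for $V\subseteq N$ let $\delta^+(V)=\{(i,j)\in A: i\in V, j\in N\setminus V\}$ and $\delta^-(V)=\{(i,j)\in A: i\in N\setminus V, j\in V\}$. For $i,j\in N$, $R_{ij}$ denotes the minimum of $\sum_{a\in A_p}d_a$ over all paths $p$ from $i$ to $j$ in $G$ (with arc set $A_p$), and $R_{ii}=0$. $\mathcal{K}$ is the set of pairs $\langle i,j\rangle$ with $i,j\in N\setminus\{s,t\}$ such that every route from $s$ to $t$ in $G$ visiting both $i$ and $j$ (in any order) has total traverse time (sum of $d$ over its arcs) exceeding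 $T$. $\mathcal{F}_2$: maximize $\sum_{i\in P}p_iy_i$ over $x\in\{0,1\}^A$, $y\in\{0,1\}^N$, $f\in\mathbb{R}^A$, $\varphi\in\mathbb{R}$ subject to: $y_i=1$ for all $i\in S\cup\{s,t\}$; $\sum_{j\in\delta^+(i)}x_{ij}=y_i$ for all $i\in S\cup P$; $\sum_{j\in\delta^+(s)}x_{sj}=\sum_{i\in\delta^-(t)}x_{it}=m-\varphi$; $\sum_{i\in\delta^-(s)}x_{is}=\sum_{j\in\delta^+(t)}x_{tj}=0$; $\sum_{j\in\delta^+(i)}x_{ij}-\sum_{j\in\delta^-(i)}x_{ji}=0$ for all $i\in S\cup P$; $f_{sj}=(T-d_{sj})x_{sj}$ for all $j\in\delta^+(s)$; $\sum_{j\in\delta^-(i)}f_{ji}-\sum_{j\in\delta^+(i)}f_{ij}=\sum_{j\in\delta^+(i)}d_{ij}x_{ij}$ for all $i\in S\cup P$; $f_{ij}\le(T-R_{si}-d_{ij})x_{ij}$ for all $(i,j)\in A$ with $i\neq s$; $f_{ij}\ge R_{jt}x_{ij}$ for all $(i,j)\in A$; $f\ge0$; $0\le\varphi\le m$. *)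

theory Defs
  imports Complex_Main "HOL-Library.Extended_Real"
begin

definition out_nbrs :: "('v \<times> 'v) set \<Rightarrow> 'v \<Rightarrow> 'v set" where
  "out_nbrs A i = {j. (i, j) \<in> A}"

definition in_nbrs :: "('v \<times> 'v) set \<Rightarrow> 'v \<Rightarrow> 'v set" where
  "in_nbrs A i = {j. (j, i) \<in> A}"

definition delta_in_set :: "('v \<times> 'v) set \<Rightarrow> 'v set \<Rightarrow> ('v \<times> 'v) set" where
  "delta_in_set A V = {(i, j) \<in> A. i \<notin> V \<and> j \<in> V}"

definition is_path :: "('v \<times> 'v) set \<Rightarrow> 'v list \<Rightarrow> 'v \<Rightarrow> 'v \<Rightarrow> bool" where
  "is_path A xs u v \<longleftrightarrow> xs \<noteq> [] \<and> hd xs = u \<and> last xs = v \<and> distinct xs \<and>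
     (\<forall>k. Suc k < length xs \<longrightarrow> (xs ! k, xs ! Suc k) \<in> A)"

definition path_cost :: "('v \<times> 'v \<Rightarrow> real) \<Rightarrow> 'v list \<Rightarrow> real" where
  "path_cost d xs = sum_list (map d (zip xs (tl xs)))"

text \<open>R_ij: shortest path time (infinite if j is unreachable from i), R_ii = 0.\<close>
definition sp_dist :: "('v \<times> 'v) set \<Rightarrow> ('v \<times> 'v \<Rightarrow> real) \<Rightarrow> 'v \<Rightarrow> 'v \<Rightarrow> ereal" where
  "sp_dist A d i j = (if i = j then 0
      else Inf {ereal (path_cost d xs) | xs. is_path A xs i j})"

definition stop_instance ::
  "'v set \<Rightarrow> ('v \<times> 'v) set \<Rightarrow> 'v \<Rightarrow> 'v \<Rightarrow> 'v set \<Rightarrow> 'v set \<Rightarrow> ('v \<Rightarrow> nat)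
   \<Rightarrow> ('v \<times> 'v \<Rightarrow> real) \<Rightarrow> nat \<Rightarrow> real \<Rightarrow> bool" where
  "stop_instance N A s t S P p d m T \<longleftrightarrow>
     finite N \<and> A \<subseteq> N \<times> N \<and> (\<forall>i. (i, i) \<notin> A) \<and>
     s \<in> N \<and> t \<in> N \<and> s \<noteq> t \<and>
     S \<subseteq> N - {s, t} \<and> P \<subseteq> N - {s, t} \<and> S \<inter> P = {} \<and> N = S \<union> P \<union> {s, t} \<and>
     (\<forall>i\<in>P. p i > 0) \<and> (\<forall>a\<in>A. d a > 0)"

definition conflict_pairs ::
  "'v set \<Rightarrow> ('v \<times> 'v) set \<Rightarrow> 'v \<Rightarrow> 'v \<Rightarrow> ('v \<times> 'v \<Rightarrow> real) \<Rightarrow> real \<Rightarrow> ('v \<times> 'v) set" where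
  "conflict_pairs N A s t d T = {(i, j). i \<in> N - {s, t} \<and> j \<in> N - {s, t} \<and>
     (\<forall>xs. is_path A xs s t \<and> i \<in> set xs \<and> j \<in> set xs \<longrightarrow> path_cost d xs > T)}"

definition F2_feasible ::
  "'v set \<Rightarrow> ('v \<times> 'v) set \<Rightarrow> 'v \<Rightarrow> 'v \<Rightarrow> 'v set \<Rightarrow> 'v set
   \<Rightarrow> ('v \<times> 'v \<Rightarrow> real) \<Rightarrow> nat \<Rightarrow> real
   \<Rightarrow> ('v \<times> 'v \<Rightarrow> real) \<Rightarrow> ('v \<Rightarrow> real) \<Rightarrow> ('v \<times> 'v \<Rightarrow> real) \<Rightarrow> real \<Rightarrow> bool" where
  "F2_feasible N A s t S P d m T x y f \<phi> \<longleftrightarrow>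
     (\<forall>e\<in>A. x e \<in> {0, 1}) \<and> (\<forall>i\<in>N. y i \<in> {0, 1}) \<and>
     (\<forall>i\<in>S \<union> {s, t}. y i = 1) \<and>
     (\<forall>i\<in>S \<union> P. (\<Sum>j\<in>out_nbrs A i. x (i, j)) = y i) \<and>
     (\<Sum>j\<in>out_nbrs A s. x (s, j)) = real m - \<phi> \<and>
     (\<Sum>i\<in>in_nbrs A t. x (i, t)) = real m - \<phi> \<and>
     (\<Sum>i\<in>in_nbrs A s. x (i, s)) = 0 \<and>
     (\<Sum>j\<in>out_nbrs A t. x (t, j)) = 0 \<and>
     (\<forall>i\<in>S \<union> P. (\<Sum>j\<in>out_nbrs A i. x (i, j)) - (\<Sum>j\<in>in_nbrs A i. x (j, i)) = 0) \<and>
     (\<forall>j\<in>out_nbrs A s. f (s, j) = (T - d (s, j)) * x (s, j)) \<and>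
     (\<forall>i\<in>S \<union> P. (\<Sum>j\<in>in_nbrs A i. f (j, i)) - (\<Sum>j\<in>out_nbrs A i. f (i, j))
                  = (\<Sum>j\<in>out_nbrs A i. d (i, j) * x (i, j))) \<and>
     (\<forall>(i, j)\<in>A. i \<noteq> s \<longrightarrow>
        ereal (f (i, j)) \<le> (ereal T - sp_dist A d s i - ereal (d (i, j))) * ereal (x (i, j))) \<and>
     (\<forall>(i, j)\<in>A. ereal (f (i, j)) \<ge> sp_dist A d j t * ereal (x (i, j))) \<and>
     (\<forall>e\<in>A. f e \<ge> 0) \<and>
     0 \<le> \<phi> \<and> \<phi> \<le> real m"

end

theory Submission
  imports Defs
begin

(* The arcs with x = 1 form vertex-disjoint s-t routes.  Every visited vertex of S \<union> P has
   exactly one used in-arc and one used out-arc, and along a route the remaining-time flow f drops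
   by exactly the time of each further arc; as it starts at T - d(s, v) and stays nonnegative,
   used walks are acyclic, extend back to s and forward to t, and every route takes time at most
   T.  A visited i \<in> V is reached on its route through some used arc entering V.  Routes do not
   branch after leaving s, so if i and j were reached through the same entering arc, a single
   route would visit both within time T, contradicting \<langle>i, j\<rangle> \<in> K. *)

lemma finite_strict_descent:
  fixes g :: "'a \<Rightarrow> 'b::linorder"
  assumes "finite X" and "a \<in> X"
    and descent: "\<And>b. b \<in> X \<Longrightarrow> \<not> P b \<Longrightarrow> \<exists>c\<in>X. g c < g b \<and> \<not> P c"
  shows "P a"
proof (rule ccontr)
  assume "\<not> P a"
  then have "{b \<in> X. \<not> P b} \<noteq> {}" using \<open>a \<in> X\<close> by blast
  then obtain b where b: "is_arg_min g (\<lambda>b. b \<in> {b \<in> X. \<not> P b}) b"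
    using ex_is_arg_min_if_finite[of "{b \<in> X. \<not> P b}" g] \<open>finite X\<close> by auto
  then obtain c where "c \<in> X" "g c < g b" "\<not> P c"
    using descent unfolding is_arg_min_def by blast
  with b show False unfolding is_arg_min_def by blast
qed

lemma rtranclp_enters:
  assumes "r\<^sup>*\<^sup>* a b" and "a \<notin> V" and "b \<in> V"
  shows "\<exists>u w. r\<^sup>*\<^sup>* a u \<and> r u w \<and> u \<notin> V \<and> w \<in> V \<and> r\<^sup>*\<^sup>* w b"
  using assms(1,3)
proof (induction rule: rtranclp_induct)
  case base
  then show ?case using \<open>a \<notin> V\<close> by simp
next
  case (step y z)
  show ?case
  proof (cases "y \<in> V")
    case True
    with step show ?thesis by (meson rtranclp.rtrancl_into_rtrancl)
  next
    case False
    with step show ?thesis by blast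
  qed
qed

lemma rtranclp_prepend_walk:
  assumes "r\<^sup>*\<^sup>* u v" and "successively r ys" and "ys \<noteq> []" and "hd ys = v"
  shows "\<exists>xs. successively r xs \<and> xs \<noteq> [] \<and> hd xs = u \<and> last xs = last ys \<and> set ys \<subseteq> set xs"
  using assms
proof (induction rule: converse_rtranclp_induct)
  case base
  then show ?case by blast
next
  case (step u w)
  then obtain xs where "successively r xs" "xs \<noteq> []" "hd xs = w" "last xs = last ys" "set ys \<subseteq> set xs"
    by blast
  with step.hyps(1) show ?case
    by (intro exI[of _ "u # xs"]) (auto simp: successively_Cons)
qed

lemma successively_reaches:
  "successively r xs \<Longrightarrow> a \<in> set xs \<Longrightarrow> r\<^sup>*\<^sup>* (hd xs) a"
proof (induction xs)
  case Nil
  then show ?case by simp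
next
  case (Cons u xs)
  then show ?case
    by (cases "a = u") (auto simp: successively_Cons intro: converse_rtranclp_into_rtranclp)
qed

lemma sum_binary_unique:
  fixes g :: "'a \<Rightarrow> real"
  assumes "finite K" and "\<And>k. k \<in> K \<Longrightarrow> g k \<in> {0, 1}" and "sum g K \<le> 1"
    and "a \<in> K" and "b \<in> K" and "g a = 1" and "g b = 1"
  shows "a = b"
proof (rule ccontr)
  assume "a \<noteq> b"
  then have "sum g {a, b} \<le> sum g K"
    using assms by (intro sum_mono2) force+
  with \<open>a \<noteq> b\<close> assms show False by simp
qed

lemma sum_binary_eq_0_iff:
  fixes g :: "'a \<Rightarrow> real"
  assumes "finite K" and "\<And>k. k \<in> K \<Longrightarrow> g k \<in> {0, 1}"
  shows "sum g K = 0 \<longleftrightarrow> (\<forall>k\<in>K. g k \<noteq> 1)"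
proof -
  have "\<forall>k\<in>K. 0 \<le> g k" using assms(2) by force
  with assms show ?thesis by (auto simp: sum_nonneg_eq_0_iff)
qed

locale F2_solution =
  fixes N :: "'v set" and A :: "('v \<times> 'v) set" and s t :: 'v and S P :: "'v set"
    and p :: "'v \<Rightarrow> nat" and d :: "'v \<times> 'v \<Rightarrow> real" and m :: nat and T :: real
    and x :: "'v \<times> 'v \<Rightarrow> real" and y :: "'v \<Rightarrow> real" and f :: "'v \<times> 'v \<Rightarrow> real"
    and \<phi> :: real
  assumes valid_instance: "stop_instance N A s t S P p d m T"
    and feasible: "F2_feasible N A s t S P d m T x y f \<phi>"
begin

definition used :: "'v \<Rightarrow> 'v \<Rightarrow> bool" where
  "used u v \<longleftrightarrow> (u, v) \<in> A \<and> x (u, v) = 1"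

lemma arcs_in_N: "A \<subseteq> N \<times> N"
  using valid_instance unfolding stop_instance_def by blast

lemma finite_arcs: "finite A"
proof (rule finite_subset[OF arcs_in_N])
  show "finite (N \<times> N)" using valid_instance unfolding stop_instance_def by blast
qed

lemma finite_in_nbrs: "finite (in_nbrs A v)"
proof (rule finite_subset)
  show "in_nbrs A v \<subseteq> fst ` A" by (force simp: in_nbrs_def)
qed (use finite_arcs in simp)

lemma finite_out_nbrs: "finite (out_nbrs A v)"
proof (rule finite_subset)
  show "out_nbrs A v \<subseteq> snd ` A" by (force simp: out_nbrs_def)
qed (use finite_arcs in simp)

lemma x_binary: "e \<in> A \<Longrightarrow> x e \<in> {0, 1}"
  using feasible unfolding F2_feasible_def by blast

lemma y_binary: "v \<in> N \<Longrightarrow> y v \<in> {0, 1}"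
  using feasible unfolding F2_feasible_def by blast

lemma inner_vertex_iff: "v \<in> S \<union> P \<longleftrightarrow> v \<in> N \<and> v \<noteq> s \<and> v \<noteq> t"
  using valid_instance unfolding stop_instance_def by blast

lemma y_inner_binary: "v \<in> S \<union> P \<Longrightarrow> y v \<in> {0, 1}"
  using y_binary inner_vertex_iff by blast

lemma out_degree: "v \<in> S \<union> P \<Longrightarrow> (\<Sum>j\<in>out_nbrs A v. x (v, j)) = y v"
  using feasible unfolding F2_feasible_def by blast

lemma in_degree: "v \<in> S \<union> P \<Longrightarrow> (\<Sum>j\<in>in_nbrs A v. x (j, v)) = y v"
proof -
  assume v: "v \<in> S \<union> P"
  then have "(\<Sum>j\<in>out_nbrs A v. x (v, j)) - (\<Sum>j\<in>in_nbrs A v. x (j, v)) = 0"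
    using feasible unfolding F2_feasible_def by blast
  with out_degree[OF v] show ?thesis by simp
qed

lemma has_pred_iff:
  assumes "v \<in> S \<union> P"
  shows "(\<exists>u. used u v) \<longleftrightarrow> y v = 1"
proof -
  have "(\<exists>u. used u v) \<longleftrightarrow> (\<Sum>j\<in>in_nbrs A v. x (j, v)) \<noteq> 0"
    using finite_in_nbrs x_binary
    by (subst sum_binary_eq_0_iff) (auto simp: used_def in_nbrs_def)
  then show ?thesis using in_degree[OF assms] y_inner_binary[OF assms] by auto
qed

lemma has_succ_iff:
  assumes "v \<in> S \<union> P"
  shows "(\<exists>w. used v w) \<longleftrightarrow> y v = 1"
proof -
  have "(\<exists>w. used v w) \<longleftrightarrow> (\<Sum>j\<in>out_nbrs A v. x (v, j)) \<noteq> 0"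
    using finite_out_nbrs x_binary
    by (subst sum_binary_eq_0_iff) (auto simp: used_def out_nbrs_def)
  then show ?thesis using out_degree[OF assms] y_inner_binary[OF assms] by auto
qed

lemma pred_unique:
  assumes "v \<in> S \<union> P" and "used u v" and "used u' v"
  shows "u = u'"
proof (rule sum_binary_unique[where g = "\<lambda>j. x (j, v)"])
  show "finite (in_nbrs A v)" by (rule finite_in_nbrs)
  show "(\<Sum>j\<in>in_nbrs A v. x (j, v)) \<le> 1"
    using in_degree[OF assms(1)] y_inner_binary[OF assms(1)] by auto
  show "\<And>k. k \<in> in_nbrs A v \<Longrightarrow> x (k, v) \<in> {0, 1}"
    using x_binary by (simp add: in_nbrs_def)
qed (use assms in \<open>auto simp: used_def in_nbrs_def\<close>)

lemma succ_unique:
  assumes "v \<in> S \<union> P" and "used v w" and "used v w'"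
  shows "w = w'"
proof (rule sum_binary_unique[where g = "\<lambda>j. x (v, j)"])
  show "finite (out_nbrs A v)" by (rule finite_out_nbrs)
  show "(\<Sum>j\<in>out_nbrs A v. x (v, j)) \<le> 1"
    using out_degree[OF assms(1)] y_inner_binary[OF assms(1)] by auto
  show "\<And>k. k \<in> out_nbrs A v \<Longrightarrow> x (v, k) \<in> {0, 1}"
    using x_binary by (simp add: out_nbrs_def)
qed (use assms in \<open>auto simp: used_def out_nbrs_def\<close>)

lemma no_pred_source: "\<not> used u s"
proof -
  have "(\<Sum>j\<in>in_nbrs A s. x (j, s)) = 0"
    using feasible unfolding F2_feasible_def by blast
  then show ?thesis
    using finite_in_nbrs x_binary sum_binary_eq_0_iff[where g = "\<lambda>j. x (j, s)" and K = "in_nbrs A s"]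
    by (auto simp: used_def in_nbrs_def)
qed

lemma no_succ_sink: "\<not> used t w"
proof -
  have "(\<Sum>j\<in>out_nbrs A t. x (t, j)) = 0"
    using feasible unfolding F2_feasible_def by blast
  then show ?thesis
    using finite_out_nbrs x_binary sum_binary_eq_0_iff[where g = "\<lambda>j. x (t, j)" and K = "out_nbrs A t"]
    by (auto simp: used_def out_nbrs_def)
qed

lemma used_tail_inner: "used u v \<Longrightarrow> u \<noteq> s \<Longrightarrow> u \<in> S \<union> P"
  using arcs_in_N no_succ_sink inner_vertex_iff unfolding used_def by blast

lemma used_head_inner: "used u v \<Longrightarrow> v \<noteq> t \<Longrightarrow> v \<in> S \<union> P"
  using arcs_in_N no_pred_source inner_vertex_iff unfolding used_def by blast

lemma in_sum_at_used:
  assumes "used u v" and "v \<in> S \<union> P"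
    and vanish: "\<And>j. (j, v) \<in> A \<Longrightarrow> x (j, v) = 0 \<Longrightarrow> g (j, v) = 0"
  shows "(\<Sum>j\<in>in_nbrs A v. g (j, v)) = g (u, v)"
proof -
  have "g (j, v) = 0" if "j \<in> in_nbrs A v - {u}" for j
    using that x_binary[of "(j, v)"] pred_unique[OF assms(2,1), of j] vanish
    by (auto simp: used_def in_nbrs_def)
  moreover have "u \<in> in_nbrs A v" using assms(1) by (simp add: used_def in_nbrs_def)
  ultimately have "(\<Sum>j\<in>in_nbrs A v. g (j, v)) = (\<Sum>j\<in>{u}. g (j, v))"
    by (intro sum.mono_neutral_right finite_in_nbrs) auto
  then show ?thesis by simp
qed

lemma out_sum_at_used:
  assumes "used v w" and "v \<in> S \<union> P"
    and vanish: "\<And>j. (v, j) \<in> A \<Longrightarrow> x (v, j) = 0 \<Longrightarrow> g (v, j) = 0"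
  shows "(\<Sum>j\<in>out_nbrs A v. g (v, j)) = g (v, w)"
proof -
  have "g (v, j) = 0" if "j \<in> out_nbrs A v - {w}" for j
    using that x_binary[of "(v, j)"] succ_unique[OF assms(2,1), of j] vanish
    by (auto simp: used_def out_nbrs_def)
  moreover have "w \<in> out_nbrs A v" using assms(1) by (simp add: used_def out_nbrs_def)
  ultimately have "(\<Sum>j\<in>out_nbrs A v. g (v, j)) = (\<Sum>j\<in>{w}. g (v, j))"
    by (intro sum.mono_neutral_right finite_out_nbrs) auto
  then show ?thesis by simp
qed

lemma d_pos: "e \<in> A \<Longrightarrow> 0 < d e"
  using valid_instance unfolding stop_instance_def by blast

lemma f_nonneg: "e \<in> A \<Longrightarrow> 0 \<le> f e"
  using feasible unfolding F2_feasible_def by blast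

lemma f_unused: "e \<in> A \<Longrightarrow> x e = 0 \<Longrightarrow> f e = 0"
proof -
  assume e: "e \<in> A" and x0: "x e = 0"
  obtain u v where uv: "e = (u, v)" by force
  show "f e = 0"
  proof (cases "u = s")
    case True
    then have "f (s, v) = (T - d (s, v)) * x (s, v)"
      using feasible e uv unfolding F2_feasible_def out_nbrs_def by simp
    then show ?thesis using x0 uv True by simp
  next
    case False
    then have "ereal (f e) \<le> (ereal T - sp_dist A d s u - ereal (d (u, v))) * ereal (x e)"
      using feasible e uv unfolding F2_feasible_def by fastforce
    then have "f e \<le> 0" using x0 by (simp add: zero_ereal_def[symmetric])
    then show ?thesis using f_nonneg[OF e] by simp
  qed
qed

lemma f_source:
  assumes "used s v"
  shows "f (s, v) = T - d (s, v)"
proof -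
  have "v \<in> out_nbrs A s" using assms by (simp add: used_def out_nbrs_def)
  then have "f (s, v) = (T - d (s, v)) * x (s, v)"
    using feasible unfolding F2_feasible_def by blast
  with assms show ?thesis by (simp add: used_def)
qed

lemma f_step:
  assumes uv: "used u v" and vw: "used v w"
  shows "f (u, v) = f (v, w) + d (v, w)"
proof -
  have v: "v \<in> S \<union> P" using used_head_inner[OF uv] no_succ_sink vw by blast
  have "(\<Sum>j\<in>in_nbrs A v. f (j, v)) - (\<Sum>j\<in>out_nbrs A v. f (v, j))
          = (\<Sum>j\<in>out_nbrs A v. d (v, j) * x (v, j))"
    using feasible v unfolding F2_feasible_def by blast
  moreover have "(\<Sum>j\<in>in_nbrs A v. f (j, v)) = f (u, v)"
    using in_sum_at_used[OF uv v] f_unused by blast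
  moreover have "(\<Sum>j\<in>out_nbrs A v. f (v, j)) = f (v, w)"
    using out_sum_at_used[OF vw v] f_unused by blast
  moreover have "(\<Sum>j\<in>out_nbrs A v. d (v, j) * x (v, j)) = d (v, w)"
    using out_sum_at_used[OF vw v, of "\<lambda>e. d e * x e"] vw by (simp add: used_def)
  ultimately show ?thesis by simp
qed

lemma f_succ_less: "used u v \<Longrightarrow> used v w \<Longrightarrow> f (v, w) < f (u, v)"
  using f_step[of u v w] d_pos[of "(v, w)"] by (simp add: used_def)

lemma f_decreasing:
  assumes "used\<^sup>*\<^sup>* w u" and "used v w" and "used u z"
  shows "f (u, z) < f (v, w)"
  using assms(1,3)
proof (induction arbitrary: z rule: rtranclp_induct)
  case base
  then show ?case using f_succ_less[OF \<open>used v w\<close>] by blast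
next
  case (step u' u)
  then show ?case using f_succ_less[of u' u z] by fastforce
qed

lemma used_acyclic: "used u v \<Longrightarrow> \<not> used\<^sup>*\<^sup>* v u"
  using f_decreasing by blast

lemma used_walk_distinct: "successively used xs \<Longrightarrow> distinct xs"
proof (induction xs)
  case Nil
  then show ?case by simp
next
  case (Cons u xs)
  have "u \<notin> set xs"
  proof
    assume "u \<in> set xs"
    then have "xs \<noteq> []" "used u (hd xs)" "used\<^sup>*\<^sup>* (hd xs) u"
      using Cons.prems successively_reaches[of used xs u] by (auto simp: successively_Cons)
    then show False using used_acyclic by blast
  qed
  moreover have "successively used xs" using Cons.prems by (auto simp: successively_Cons)
  ultimately show ?case using Cons.IH by simp
qed

lemma used_walk_cost:
  "successively used (u # v # rest) \<Longrightarrow> path_cost d (v # rest) \<le> f (u, v)"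
proof (induction rest arbitrary: u v)
  case Nil
  then show ?case using f_nonneg by (simp add: path_cost_def used_def)
next
  case (Cons w rest)
  then have "path_cost d (w # rest) \<le> f (v, w)" by simp
  moreover have "f (u, v) = f (v, w) + d (v, w)"
    using Cons.prems f_step[of u v w] by simp
  ultimately show ?case by (simp add: path_cost_def)
qed

lemma used_route:
  assumes walk: "successively used xs" and "xs \<noteq> []" and "hd xs = s" and "last xs = t"
  shows "is_path A xs s t \<and> path_cost d xs \<le> T"
proof
  have "successively (\<lambda>u v. (u, v) \<in> A) xs"
    using walk by (rule successively_mono) (simp add: used_def)
  then have "\<forall>k. Suc k < length xs \<longrightarrow> (xs ! k, xs ! Suc k) \<in> A"
    by (simp add: successively_conv_nth)
  with assms used_walk_distinct[OF walk] show "is_path A xs s t"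
    unfolding is_path_def by blast
  have "s \<noteq> t" using valid_instance unfolding stop_instance_def by blast
  obtain rest where "xs = s # rest" using \<open>xs \<noteq> []\<close> \<open>hd xs = s\<close> by (cases xs) auto
  with \<open>last xs = t\<close> \<open>s \<noteq> t\<close> obtain v rest' where xs: "xs = s # v # rest'"
    by (cases rest) auto
  then have "path_cost d (v # rest') \<le> f (s, v)" using walk used_walk_cost by blast
  moreover have "f (s, v) = T - d (s, v)" using walk xs f_source by simp
  ultimately show "path_cost d xs \<le> T" using xs by (simp add: path_cost_def)
qed

lemma route_through:
  assumes "used\<^sup>*\<^sup>* s i" and "used\<^sup>*\<^sup>* i j" and "used\<^sup>*\<^sup>* j t"
  shows "\<exists>xs. is_path A xs s t \<and> i \<in> set xs \<and> j \<in> set xs \<and> path_cost d xs \<le> T"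
proof -
  obtain xs\<^sub>j where "successively used xs\<^sub>j" "xs\<^sub>j \<noteq> []" "hd xs\<^sub>j = j" "last xs\<^sub>j = t"
    using rtranclp_prepend_walk[OF assms(3), of "[t]"] by auto
  then obtain xs\<^sub>i where "successively used xs\<^sub>i" "xs\<^sub>i \<noteq> []" "hd xs\<^sub>i = i" "last xs\<^sub>i = t"
      "j \<in> set xs\<^sub>i"
    using rtranclp_prepend_walk[OF assms(2), of xs\<^sub>j] by (metis list.set_sel(1) subsetD)
  then obtain xs where "successively used xs" "xs \<noteq> []" "hd xs = s" "last xs = t"
      "i \<in> set xs" "j \<in> set xs"
    using rtranclp_prepend_walk[OF assms(1), of xs\<^sub>i] by (metis list.set_sel(1) subsetD)
  then show ?thesis using used_route by blast
qed

lemma finite_used_arcs: "finite {(u, v). used u v}"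
  using finite_arcs by (rule finite_subset[rotated]) (auto simp: used_def)

lemma reaches_from_source:
  assumes "used u v"
  shows "used\<^sup>*\<^sup>* s u"
proof -
  let ?X = "{(u, v). used u v}"
  have descent: "\<exists>c\<in>?X. - f c < - f b \<and> \<not> used\<^sup>*\<^sup>* s (fst c)"
    if "b \<in> ?X" and "\<not> used\<^sup>*\<^sup>* s (fst b)" for b
  proof -
    obtain u' v' where b: "b = (u', v')" "used u' v'" using \<open>b \<in> ?X\<close> by auto
    with that(2) have "u' \<in> S \<union> P" using used_tail_inner by auto
    with b obtain w where "used w u'" using has_pred_iff has_succ_iff by blast
    moreover have "f (u', v') < f (w, u')" using f_succ_less \<open>used w u'\<close> b(2) by blast
    moreover have "\<not> used\<^sup>*\<^sup>* s w"
      using that(2) b(1) \<open>used w u'\<close> by (auto intro: rtranclp.rtrancl_into_rtrancl)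
    ultimately show ?thesis using b by (intro bexI[of _ "(w, u')"]) auto
  qed
  have "used\<^sup>*\<^sup>* s (fst (u, v))"
    by (rule finite_strict_descent[OF finite_used_arcs _ descent]) (use assms in simp)
  then show ?thesis by simp
qed

lemma reaches_sink:
  assumes "used u v"
  shows "used\<^sup>*\<^sup>* v t"
proof -
  let ?X = "{(u, v). used u v}"
  have descent: "\<exists>c\<in>?X. f c < f b \<and> \<not> used\<^sup>*\<^sup>* (snd c) t"
    if "b \<in> ?X" and "\<not> used\<^sup>*\<^sup>* (snd b) t" for b
  proof -
    obtain u' v' where b: "b = (u', v')" "used u' v'" using \<open>b \<in> ?X\<close> by auto
    with that(2) have "v' \<in> S \<union> P" using used_head_inner by auto
    with b obtain w where "used v' w" using has_pred_iff has_succ_iff by blast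
    moreover have "f (v', w) < f (u', v')" using f_succ_less \<open>used v' w\<close> b(2) by blast
    moreover have "\<not> used\<^sup>*\<^sup>* w t"
      using that(2) b(1) \<open>used v' w\<close> by (auto intro: converse_rtranclp_into_rtranclp)
    ultimately show ?thesis using b by (intro bexI[of _ "(v', w)"]) auto
  qed
  have "used\<^sup>*\<^sup>* (snd (u, v)) t"
    by (rule finite_strict_descent[OF finite_used_arcs _ descent]) (use assms in simp)
  then show ?thesis by simp
qed

lemma reaches_avoid_source: "used\<^sup>*\<^sup>* b v \<Longrightarrow> b \<noteq> s \<Longrightarrow> v \<noteq> s"
  by (metis no_pred_source rtranclp.cases)

lemma used_confluent:
  assumes "used\<^sup>*\<^sup>* b i" and "used\<^sup>*\<^sup>* b j" and "b \<noteq> s"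
  shows "used\<^sup>*\<^sup>* i j \<or> used\<^sup>*\<^sup>* j i"
  using assms(1)
proof (induction rule: rtranclp_induct)
  case base
  then show ?case using assms(2) by blast
next
  case (step u v)
  from step.IH show ?case
  proof
    assume "used\<^sup>*\<^sup>* u j"
    then show ?thesis
    proof (cases rule: converse_rtranclpE)
      case base
      then show ?thesis using step.hyps(2) by blast
    next
      case (step w)
      have "u \<in> S \<union> P"
        using used_tail_inner reaches_avoid_source[OF \<open>used\<^sup>*\<^sup>* b u\<close> \<open>b \<noteq> s\<close>] step.hyps(2) by blast
      then have "w = v" using succ_unique step.hyps(2) \<open>used u w\<close> by blast
      then show ?thesis using \<open>used\<^sup>*\<^sup>* w j\<close> by blast
    qed
  next
    assume "used\<^sup>*\<^sup>* j u"
    then show ?thesis using step.hyps(2) by (meson rtranclp.rtrancl_into_rtrancl)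
  qed
qed

lemma conflict_no_common_entry:
  assumes "(i, j) \<in> conflict_pairs N A s t d T"
    and "used a b" and "used\<^sup>*\<^sup>* b i" and "used\<^sup>*\<^sup>* b j"
  shows False
proof -
  have reach_end: "used\<^sup>*\<^sup>* v t" if "used\<^sup>*\<^sup>* b v" for v
    using that \<open>used a b\<close> reaches_sink by (metis rtranclp.cases)
  have "used\<^sup>*\<^sup>* s b"
    using reaches_from_source \<open>used a b\<close> by (blast intro: rtranclp.rtrancl_into_rtrancl)
  then have "used\<^sup>*\<^sup>* s i" "used\<^sup>*\<^sup>* s j" using assms(3,4) by auto
  moreover have "b \<noteq> s" using \<open>used a b\<close> no_pred_source by blast
  then have "used\<^sup>*\<^sup>* i j \<or> used\<^sup>*\<^sup>* j i" using used_confluent assms(3,4) by blast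
  ultimately obtain xs where "is_path A xs s t" "i \<in> set xs" "j \<in> set xs" "path_cost d xs \<le> T"
    using route_through reach_end assms(3,4) by blast
  with assms(1) show False unfolding conflict_pairs_def by fastforce
qed

lemma entering_arc:
  assumes "v \<in> S \<union> P" and "y v = 1" and "v \<in> V" and "s \<notin> V"
  shows "\<exists>a b. (a, b) \<in> delta_in_set A V \<and> used a b \<and> used\<^sup>*\<^sup>* b v"
proof -
  obtain u where "used u v" using has_pred_iff assms(1,2) by blast
  then have "used\<^sup>*\<^sup>* s v"
    using reaches_from_source by (blast intro: rtranclp.rtrancl_into_rtrancl)
  then obtain a b where "used a b" "a \<notin> V" "b \<in> V" "used\<^sup>*\<^sup>* b v"
    using rtranclp_enters assms(3,4) by metis
  then show ?thesis by (auto simp: used_def delta_in_set_def)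
qed

lemma entering_sum_mono:
  assumes "E \<subseteq> delta_in_set A V"
  shows "(\<Sum>e\<in>E. x e) \<le> (\<Sum>e\<in>delta_in_set A V. x e)"
proof (rule sum_mono2[OF _ assms])
  show "finite (delta_in_set A V)"
    using finite_arcs by (rule finite_subset[rotated]) (auto simp: delta_in_set_def)
  show "0 \<le> x e" if "e \<in> delta_in_set A V - E" for e
    using that x_binary[of e] by (auto simp: delta_in_set_def)
qed

lemma entering_sum_ge_visit:
  assumes "v \<in> S \<union> P" and "v \<in> V" and "s \<notin> V"
  shows "y v \<le> (\<Sum>e\<in>delta_in_set A V. x e)"
proof -
  have "y v \<in> {0, 1}" using y_inner_binary[OF assms(1)] .
  moreover have "0 \<le> (\<Sum>e\<in>delta_in_set A V. x e)" using entering_sum_mono[of "{}"] by simp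
  moreover have "1 \<le> (\<Sum>e\<in>delta_in_set A V. x e)" if visited: "y v = 1"
  proof -
    obtain a b where "(a, b) \<in> delta_in_set A V" "used a b"
      using entering_arc[OF assms(1) visited assms(2,3)] by blast
    then show ?thesis using entering_sum_mono[of "{(a, b)}"] by (simp add: used_def)
  qed
  ultimately show ?thesis by auto
qed

lemma entering_sum_ge_conflict_pair:
  assumes "(i, j) \<in> conflict_pairs N A s t d T" and "y i = 1" and "y j = 1"
    and "i \<in> V" and "j \<in> V" and "s \<notin> V"
  shows "2 \<le> (\<Sum>e\<in>delta_in_set A V. x e)"
proof -
  have "i \<in> S \<union> P" and "j \<in> S \<union> P"
    using assms(1) inner_vertex_iff unfolding conflict_pairs_def by auto
  obtain a b where ab: "(a, b) \<in> delta_in_set A V" "used a b" "used\<^sup>*\<^sup>* b i"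
    using entering_arc[OF \<open>i \<in> S \<union> P\<close> assms(2,4,6)] by blast
  obtain a' b' where ab': "(a', b') \<in> delta_in_set A V" "used a' b'" "used\<^sup>*\<^sup>* b' j"
    using entering_arc[OF \<open>j \<in> S \<union> P\<close> assms(3,5,6)] by blast
  have "(a, b) \<noteq> (a', b')"
    using conflict_no_common_entry[OF assms(1)] ab ab' by blast
  then show ?thesis
    using entering_sum_mono[of "{(a, b), (a', b')}"] ab ab' by (simp add: used_def)
qed

end

theorem proposition2:
  fixes N :: "'v set" and A :: "('v \<times> 'v) set" and s t :: 'v and S P :: "'v set"
    and p :: "'v \<Rightarrow> nat" and d :: "'v \<times> 'v \<Rightarrow> real" and m :: nat and T :: real
    and x :: "'v \<times> 'v \<Rightarrow> real" and y :: "'v \<Rightarrow> real" and f :: "'v \<times> 'v \<Rightarrow> real"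
    and \<phi> :: real and i j :: 'v and V :: "'v set"
  assumes "stop_instance N A s t S P p d m T"
    and "F2_feasible N A s t S P d m T x y f \<phi>"
    and "(i, j) \<in> conflict_pairs N A s t d T"
    and "V \<subseteq> N - {s}" and "i \<in> V" and "j \<in> V"
  shows "(\<Sum>e\<in>delta_in_set A V. x e) \<ge> y i + y j"
proof -
  interpret F2_solution N A s t S P p d m T x y f \<phi>
    using assms(1,2) by (rule F2_solution.intro)
  have i: "i \<in> S \<union> P" and j: "j \<in> S \<union> P" and s: "s \<notin> V"
    using assms(3,4) inner_vertex_iff unfolding conflict_pairs_def by auto
  consider "y i = 1" "y j = 1" | "y i = 0" | "y j = 0"
    using y_binary assms(4-6) by blast
  then show ?thesis
  proof cases
    case 1
    then show ?thesis using entering_sum_ge_conflict_pair[OF assms(3) _ _ assms(5,6) s] by simp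
  next
    case 2
    then show ?thesis using entering_sum_ge_visit[OF j assms(6) s] by simp
  next
    case 3
    then show ?thesis using entering_sum_ge_visit[OF i assms(5) s] by simp
  qed
qed

end
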